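(* Let $m\ge1$, $n>1$ be integers and $1\le l<(n-1)/2$. If $(x,y,z)\in\mathbb{C}^3$ satisfies $v(x,y,z)=2\cos\frac{2l\pi}{n-1}$ and $S_m(z)-vS_{m-1}(z)=0$, then $v=2\cos\frac{2l\pi}{n-1}\in\mathbb{R}$ and $$z=-v^3+v^2xy-v(x^2+y^2-3)+xy.$$ Hence the set of such points contains no point of the form $(2,2,z)$ with $z\notin\mathbb{R}$.
   Context: $S_k(q)$ are the Chebyshev polynomials defined for all integers $k$ by $S_0=1$, $S_1=q$, $S_{k+1}=qS_k-S_{k-1}$. Here $v(x,y,z)=\big(xS_m(z)-yS_{m-1}(z)\big)\big(yS_m(z)-xS_{m-1}(z)\big)-z\big(S_m^2(z)+S_{m-1}^2(z)\big)+4S_m(z)S_{m-1}(z)$. *)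

theory Defs
  imports Complex_Main
begin

fun chebS_nat :: "nat \<Rightarrow> complex \<Rightarrow> complex" where
  "chebS_nat 0 q = 1"
| "chebS_nat (Suc 0) q = q"
| "chebS_nat (Suc (Suc k)) q = q * chebS_nat (Suc k) q - chebS_nat k q"

text \<open>Extension to all integers by the same recurrence: S_{-1} = 0 and S_{-k} = - S_{k-2} for k >= 2.\<close>
definition chebS :: "int \<Rightarrow> complex \<Rightarrow> complex" where
  "chebS k q = (if 0 \<le> k then chebS_nat (nat k) q
                else if k = -1 then 0
                else - chebS_nat (nat (- k - 2)) q)"

definition vfun :: "int \<Rightarrow> complex \<Rightarrow> complex \<Rightarrow> complex \<Rightarrow> complex" where
  "vfun m x y z =
     (x * chebS m z - y * chebS (m - 1) z) * (y * chebS m z - x * chebS (m - 1) z)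
     - z * ((chebS m z)\<^sup>2 + (chebS (m - 1) z)\<^sup>2) + 4 * chebS m z * chebS (m - 1) z"

end

theory Submission
  imports Defs
begin

text \<open>Writing a = S_m(z), b = S_{m-1}(z), the Cassini identity a^2 + b^2 - z a b = 1 holds.
  If a = v b, it gives b^2 (v^2 - z v + 1) = 1, so b \<noteq> 0, and dividing the defining equation
  of v by b^2 leaves a polynomial identity in v, x, y, z that is linear in z. Solving for z gives
  the formula; for x = y = 2 its right-hand side is a real polynomial in the real number v.
  The Cassini identity holds for every integer m.\<close>

lemma chebS_nat_cassini:
  "(chebS_nat (Suc k) q)\<^sup>2 + (chebS_nat k q)\<^sup>2 - q * chebS_nat (Suc k) q * chebS_nat k q = 1"
  by (induction k) (simp_all add: power2_eq_square algebra_simps)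

lemma chebS_cassini:
  "(chebS m q)\<^sup>2 + (chebS (m - 1) q)\<^sup>2 - q * chebS m q * chebS (m - 1) q = 1"
proof (cases "m \<ge> 1")
  case True
  then have "chebS m q = chebS_nat (Suc (nat (m - 1))) q" "chebS (m - 1) q = chebS_nat (nat (m - 1)) q"
    by (simp_all add: chebS_def Suc_nat_eq_nat_zadd1)
  then show ?thesis using chebS_nat_cassini by simp
next
  case False
  then consider "m = 0" | "m = -1" | "m \<le> -2" by linarith
  then show ?thesis
  proof cases
    case 3
    then have "chebS m q = - chebS_nat (nat (- m - 2)) q"
      "chebS (m - 1) q = - chebS_nat (Suc (nat (- m - 2))) q"
      by (simp_all add: chebS_def Suc_nat_eq_nat_zadd1)
    then show ?thesis using chebS_nat_cassini[of "nat (- m - 2)" q] by (simp add: algebra_simps)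
  qed (simp_all add: chebS_def)
qed

lemma eliminate_eigenvalue:
  fixes a b v x y z :: "'a :: field"
  assumes cassini: "a\<^sup>2 + b\<^sup>2 - z * a * b = 1"
    and eigen: "a = v * b"
    and v: "v = (x * a - y * b) * (y * a - x * b) - z * (a\<^sup>2 + b\<^sup>2) + 4 * a * b"
  shows "z = - (v ^ 3) + v\<^sup>2 * x * y - v * (x\<^sup>2 + y\<^sup>2 - 3) + x * y"
proof -
  have norm: "b\<^sup>2 * (v\<^sup>2 + 1 - z * v) = 1"
    using cassini eigen by (simp add: power2_eq_square algebra_simps)
  then have "b\<^sup>2 \<noteq> 0" by auto
  have "b\<^sup>2 * (v * (v\<^sup>2 + 1 - z * v)) = v * (b\<^sup>2 * (v\<^sup>2 + 1 - z * v))"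
    by (simp add: algebra_simps)
  also have "\<dots> = v"
    using norm by simp
  finally have "b\<^sup>2 * (v * (v\<^sup>2 + 1 - z * v)) = v" .
  moreover have "b\<^sup>2 * ((x * v - y) * (y * v - x) - z * (v\<^sup>2 + 1) + 4 * v)
      = (x * a - y * b) * (y * a - x * b) - z * (a\<^sup>2 + b\<^sup>2) + 4 * a * b"
    unfolding eigen by (simp add: power2_eq_square algebra_simps)
  ultimately have "b\<^sup>2 * (v * (v\<^sup>2 + 1 - z * v))
      = b\<^sup>2 * ((x * v - y) * (y * v - x) - z * (v\<^sup>2 + 1) + 4 * v)"
    using v by simp
  then have "v * (v\<^sup>2 + 1 - z * v) = (x * v - y) * (y * v - x) - z * (v\<^sup>2 + 1) + 4 * v"
    using \<open>b\<^sup>2 \<noteq> 0\<close> by simp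
  then show ?thesis
    by (simp add: power2_eq_square power3_eq_cube algebra_simps)
qed

lemma z_eq_of_chebS_eigen:
  assumes "chebS m z = vfun m x y z * chebS (m - 1) z"
  shows "z = - ((vfun m x y z) ^ 3) + (vfun m x y z)\<^sup>2 * x * y
             - vfun m x y z * (x\<^sup>2 + y\<^sup>2 - 3) + x * y"
  using eliminate_eigenvalue[OF chebS_cassini assms] by (simp add: vfun_def)

theorem lemma4p13:
  fixes m n l :: int and x y z :: complex
  assumes "m \<ge> 1" and "n > 1" and "1 \<le> l" and "real_of_int l < (real_of_int n - 1) / 2"
    and "vfun m x y z = complex_of_real (2 * cos (2 * real_of_int l * pi / (real_of_int n - 1)))"
    and "chebS m z - vfun m x y z * chebS (m - 1) z = 0"
  shows "vfun m x y z \<in> \<real>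
         \<and> z = - ((vfun m x y z)^3) + (vfun m x y z)^2 * x * y
               - vfun m x y z * (x^2 + y^2 - 3) + x * y
         \<and> (x = 2 \<and> y = 2 \<longrightarrow> z \<in> \<real>)"
proof -
  let ?v = "vfun m x y z"
  have real_v: "?v \<in> \<real>"
    using assms(5) by simp
  have z_eq: "z = - (?v ^ 3) + ?v\<^sup>2 * x * y - ?v * (x\<^sup>2 + y\<^sup>2 - 3) + x * y"
    using z_eq_of_chebS_eigen assms(6) by simp
  have "z \<in> \<real>" if "x = 2" "y = 2"
  proof -
    have "z = - (?v ^ 3) + ?v\<^sup>2 * 2 * 2 - ?v * (2\<^sup>2 + 2\<^sup>2 - 3) + 2 * 2"
      using z_eq that by simp
    moreover have "- (?v ^ 3) + ?v\<^sup>2 * 2 * 2 - ?v * (2\<^sup>2 + 2\<^sup>2 - 3) + 2 * 2 \<in> \<real>"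
      using real_v by (intro Reals_add Reals_diff Reals_mult Reals_power Reals_minus Reals_numeral)
    ultimately show ?thesis
      by simp
  qed
  with real_v z_eq show ?thesis by blast
qed

end
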